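(* Let $(X_m)_{m\in\mathbb Z}$ and $(Y_m)_{m\in\mathbb Z}$ be homogeneous second order recurrence sequences with constant coefficients that possess the same recurrence relation. Suppose $Y_m\neq 0$ for all integers $m$, and that the sequences $\{X_m\}$ and $\{Y_m\}$ have at most three members in common. Then for all integers $a,b,c,d,e,m$, $$(X_{d-a}Y_{e-b}-X_{e-a}Y_{d-b})X_{m-c}=(X_{d-c}Y_{e-b}-X_{e-c}Y_{d-b})X_{m-a}+(X_{d-a}X_{e-c}-X_{e-a}X_{d-c})Y_{m-b}.$$
   Context: A homogeneous second order recurrence sequence with constant coefficients is a sequence $(X_m)_{m\in\mathbb Z}$ of complex numbers for which there are constants $p,q\in\mathbb C$, $q\neq 0$, with $X_m=pX_{m-1}+qX_{m-2}$ for all $m\in\mathbb Z$. Two such sequences possess the same recurrence relation if they satisfy it with the same constants $p,q$. *)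

theory Defs
  imports Complex_Main
begin

definition hom2rec :: "complex \<Rightarrow> complex \<Rightarrow> (int \<Rightarrow> complex) \<Rightarrow> bool" where
  "hom2rec p q X \<longleftrightarrow> q \<noteq> 0 \<and> (\<forall>m::int. X m = p * X (m - 1) + q * X (m - 2))"

end

theory Submission
  imports Defs
begin

text \<open>All solutions of a second order recurrence with fixed coefficients p, q are, uniformly,
  the same linear combinations of their two initial values; so with the coefficient vectors
  v_n = (A n, B n) every term X (n - s) is the bilinear pairing of v_n with the vector
  (X (-s), X (1 - s)).\<close>

lemma hom2rec_shift: "hom2rec p q f \<Longrightarrow> hom2rec p q (\<lambda>m. f (m - s))"
  unfolding hom2rec_def by (metis diff_diff_eq add.commute)

lemma hom2rec_step:
  assumes "hom2rec p q f"
  shows "f (n + 2) = p * f (n + 1) + q * f n"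
  using assms unfolding hom2rec_def by (metis add_diff_cancel_right' diff_diff_eq one_add_one)

definition uniform_initial_combination :: "complex \<Rightarrow> complex \<Rightarrow> int \<Rightarrow> bool" where
  "uniform_initial_combination p q n \<longleftrightarrow>
     (\<exists>a b. \<forall>f. hom2rec p q f \<longrightarrow> f n = a * f 0 + b * f 1)"

lemma uniform_initial_combination_pair:
  assumes "q \<noteq> 0"
  shows "uniform_initial_combination p q n \<and> uniform_initial_combination p q (n + 1)"
proof (induction n rule: int_induct[where k = 0])
  case base
  show ?case unfolding uniform_initial_combination_def
    by (metis add_0 mult_1 mult_zero_left add.right_neutral)
next
  case (step1 i)
  then obtain a b a' b' where
    i: "\<And>f. hom2rec p q f \<Longrightarrow> f i = a * f 0 + b * f 1" and
    i1: "\<And>f. hom2rec p q f \<Longrightarrow> f (i + 1) = a' * f 0 + b' * f 1"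
    unfolding uniform_initial_combination_def by blast
  have "f (i + 2) = (p * a' + q * a) * f 0 + (p * b' + q * b) * f 1" if "hom2rec p q f" for f
    using hom2rec_step[OF that, of i] i[OF that] i1[OF that] by (simp add: algebra_simps)
  then have "uniform_initial_combination p q (i + 2)"
    unfolding uniform_initial_combination_def by blast
  with step1 show ?case by (simp add: add.assoc)
next
  case (step2 i)
  then obtain a b a' b' where
    i: "\<And>f. hom2rec p q f \<Longrightarrow> f i = a * f 0 + b * f 1" and
    i1: "\<And>f. hom2rec p q f \<Longrightarrow> f (i + 1) = a' * f 0 + b' * f 1"
    unfolding uniform_initial_combination_def by blast
  have "f (i - 1) = ((a' - p * a) / q) * f 0 + ((b' - p * b) / q) * f 1" if "hom2rec p q f" for f
  proof -
    have "f (i - 1) = (f (i + 1) - p * f i) / q"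
      using hom2rec_step[OF that, of "i - 1"] assms by (simp add: field_simps add.commute)
    then show ?thesis
      using i[OF that] i1[OF that] assms
      by (simp add: diff_divide_distrib add_divide_distrib algebra_simps)
  qed
  then have "uniform_initial_combination p q (i - 1)"
    unfolding uniform_initial_combination_def by blast
  with step2 show ?case by simp
qed

lemma hom2rec_initial_coefficients:
  assumes "q \<noteq> 0"
  obtains A B :: "int \<Rightarrow> complex"
  where "\<And>f n s. hom2rec p q f \<Longrightarrow> f (n - s) = A n * f (- s) + B n * f (1 - s)"
proof -
  have "\<forall>n. \<exists>ab. \<forall>f. hom2rec p q f \<longrightarrow> f n = fst ab * f 0 + snd ab * f 1"
    using uniform_initial_combination_pair[OF assms]
    unfolding uniform_initial_combination_def by fastforce
  then obtain C where C: "\<And>n f. hom2rec p q f \<Longrightarrow> f n = fst (C n) * f 0 + snd (C n) * f 1"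
    by metis
  show thesis
    by (rule that[of "fst \<circ> C" "snd \<circ> C"]) (use C[OF hom2rec_shift] in \<open>simp\<close>)
qed

lemma pluecker_identity_2d:
  fixes x0 x1 z0 z1 y0 y1 u0 u1 v0 v1 w0 w1 :: "'a :: comm_ring"
  defines "\<phi> \<equiv> \<lambda>s0 s1 t0 t1. s0 * t0 + s1 * t1"
  shows "(\<phi> u0 u1 x0 x1 * \<phi> v0 v1 y0 y1 - \<phi> v0 v1 x0 x1 * \<phi> u0 u1 y0 y1) * \<phi> w0 w1 z0 z1 =
      (\<phi> u0 u1 z0 z1 * \<phi> v0 v1 y0 y1 - \<phi> v0 v1 z0 z1 * \<phi> u0 u1 y0 y1) * \<phi> w0 w1 x0 x1
      + (\<phi> u0 u1 x0 x1 * \<phi> v0 v1 z0 z1 - \<phi> v0 v1 x0 x1 * \<phi> u0 u1 z0 z1) * \<phi> w0 w1 y0 y1"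
  unfolding \<phi>_def by (simp add: algebra_simps)

theorem lemma7:
  fixes X Y :: "int \<Rightarrow> complex" and p q :: complex
  assumes "hom2rec p q X" and "hom2rec p q Y"
    and "\<forall>m. Y m \<noteq> 0"
    and "finite (range X \<inter> range Y)" and "card (range X \<inter> range Y) \<le> 3"
  shows "\<forall>a b c d e m :: int.
    (X (d - a) * Y (e - b) - X (e - a) * Y (d - b)) * X (m - c) =
      (X (d - c) * Y (e - b) - X (e - c) * Y (d - b)) * X (m - a)
      + (X (d - a) * X (e - c) - X (e - a) * X (d - c)) * Y (m - b)"
proof (intro allI)
  fix a b c d e m :: int
  have "q \<noteq> 0" using assms(1) unfolding hom2rec_def by simp
  obtain A B where AB: "\<And>f n s. hom2rec p q f \<Longrightarrow> f (n - s) = A n * f (- s) + B n * f (1 - s)"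
    using hom2rec_initial_coefficients[OF \<open>q \<noteq> 0\<close>] by metis
  show "(X (d - a) * Y (e - b) - X (e - a) * Y (d - b)) * X (m - c) =
      (X (d - c) * Y (e - b) - X (e - c) * Y (d - b)) * X (m - a)
      + (X (d - a) * X (e - c) - X (e - a) * X (d - c)) * Y (m - b)"
    unfolding AB[OF assms(1), of d a] AB[OF assms(1), of e a] AB[OF assms(1), of m a]
      AB[OF assms(1), of d c] AB[OF assms(1), of e c] AB[OF assms(1), of m c]
      AB[OF assms(2), of d b] AB[OF assms(2), of e b] AB[OF assms(2), of m b]
    by (rule pluecker_identity_2d[unfolded atomize_eq])
qed

end
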